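(* Let $M$ be a Spiky CRMDP, and define for $x\in\mathcal{S}$ the reward lower and upper Lipschitz bounds $$\underline{R}(x) = \max_{y\in\mathcal{S}_n}\big(R(y) - d(x,y)\big), \qquad \overline{R}(x) = \min_{y\in\mathcal{S}_n}\big(R(y) + d(x,y)\big).$$ Let $\pi'$ be any policy that is optimal with respect to the reward function $\overline{R}$, and let $\pi^*$ be a policy optimal with respect to $R$. Then the expected regret of $\pi'$ with respect to $R$ satisfies $$\mathbb{E}_{\tau\sim\pi^*}\sum_{x\in\tau}R(x) - \mathbb{E}_{\tau\sim\pi'}\sum_{x\in\tau}R(x) \;\le\; \sup_{\pi \text{ optimal w.r.t. } \overline{R}} \;\mathbb{E}_{\tau\sim\pi}\sum_{x\in\tau}\big(\overline{R}(x) - \underline{R}(x)\big).$$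
   Context: A Corrupt Reward MDP (CRMDP) is a finite-state Markov decision process $(\mathcal{S}, \mathcal{A}, T, R)$ with state set $\mathcal{S}$, action set $\mathcal{A}$, transition function $T$ and (true) reward function $R\colon \mathcal{S}\to\mathbb{R}$, together with an additional corrupt reward function $C\colon \mathcal{S} \to \mathbb{R}$. The set of non-corrupt states is $\mathcal{S}_n = \{x \in \mathcal{S} : R(x) = C(x)\}$ and the set of corrupt states is $\mathcal{S}_c = \mathcal{S}\setminus \mathcal{S}_n$. A Spiky CRMDP is a CRMDP together with a metric $d\colon \mathcal{S}\times\mathcal{S}\to[0,\infty)$ and a function $\mathrm{LV}\colon \mathcal{P}(\mathcal{S})\times\mathcal{S}\to[0,\infty)$, written $(A,x)\mapsto \mathrm{LV}_A(x)$, non-decreasing with respect to set inclusion in $A$, such that: (1) $\mathcal{S}_n$ is nonempty; (2) $|R(x)-R(y)|\le d(x,y)$ for all $x,y\in\mathcal{S}$; (3) for every $x\in\mathcal{S}_c$, $\mathrm{LV}_{\mathcal{S}_n}(x) > \sup_{y\in\mathcal{S}_n}\mathrm{LV}_{\mathcal{S}}(y)$. A policy $\pi$ generates random trajectories $\tau\sim\pi$, viewed as (finite) sequences of states; for a reward function $r\colon\mathcal{S}\to\mathbb{R}$, the value of $\pi$ is $\mathbb{E}_{\tau\sim\pi}\sum_{x\in\tau} r(x)$ (sum over the states of the trajectory, with multiplicity), assumed finite, and $\pi$ is optimal with respect to $r$ if it maximizes this value over all policies. *)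

theory Defs
  imports "HOL-Probability.Probability"
begin

definition is_metric :: "('s \<Rightarrow> 's \<Rightarrow> real) \<Rightarrow> bool" where
  "is_metric d \<longleftrightarrow>
     (\<forall>x y. 0 \<le> d x y) \<and> (\<forall>x y. d x y = 0 \<longleftrightarrow> x = y) \<and>
     (\<forall>x y. d x y = d y x) \<and> (\<forall>x y z. d x z \<le> d x y + d y z)"

definition noncorrupt :: "('s \<Rightarrow> real) \<Rightarrow> ('s \<Rightarrow> real) \<Rightarrow> 's set" where
  "noncorrupt R C = {x. R x = C x}"

definition spiky :: "('s::finite \<Rightarrow> real) \<Rightarrow> ('s \<Rightarrow> real) \<Rightarrow> ('s \<Rightarrow> 's \<Rightarrow> real)
                      \<Rightarrow> ('s set \<Rightarrow> 's \<Rightarrow> real) \<Rightarrow> bool" where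
  "spiky R C d LV \<longleftrightarrow>
     is_metric d \<and>
     (\<forall>A x. 0 \<le> LV A x) \<and> (\<forall>A B x. A \<subseteq> B \<longrightarrow> LV A x \<le> LV B x) \<and>
     noncorrupt R C \<noteq> {} \<and>
     (\<forall>x y. \<bar>R x - R y\<bar> \<le> d x y) \<and>
     (\<forall>x \<in> - noncorrupt R C.
        LV (noncorrupt R C) x > (SUP y\<in>noncorrupt R C. LV UNIV y))"

definition R_low :: "('s::finite \<Rightarrow> real) \<Rightarrow> ('s \<Rightarrow> real) \<Rightarrow> ('s \<Rightarrow> 's \<Rightarrow> real) \<Rightarrow> 's \<Rightarrow> real" where
  "R_low R C d x = Max ((\<lambda>y. R y - d x y) ` noncorrupt R C)"

definition R_up :: "('s::finite \<Rightarrow> real) \<Rightarrow> ('s \<Rightarrow> real) \<Rightarrow> ('s \<Rightarrow> 's \<Rightarrow> real) \<Rightarrow> 's \<Rightarrow> real" where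
  "R_up R C d x = Min ((\<lambda>y. R y + d x y) ` noncorrupt R C)"

text \<open>Value of a policy: expected sum of rewards along its random finite trajectory.
  A policy is abstracted by the distribution of the trajectories it generates.\<close>
definition policy_value :: "('p \<Rightarrow> 's list pmf) \<Rightarrow> ('s \<Rightarrow> real) \<Rightarrow> 'p \<Rightarrow> real" where
  "policy_value traj r \<pi> = measure_pmf.expectation (traj \<pi>) (\<lambda>\<tau>. sum_list (map r \<tau>))"

definition optimal :: "'p set \<Rightarrow> ('p \<Rightarrow> 's list pmf) \<Rightarrow> ('s \<Rightarrow> real) \<Rightarrow> 'p \<Rightarrow> bool" where
  "optimal Pol traj r \<pi> \<longleftrightarrow> \<pi> \<in> Pol \<and> (\<forall>\<sigma>\<in>Pol. policy_value traj r \<sigma> \<le> policy_value traj r \<pi>)"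

end

theory Submission
  imports Defs
begin

text \<open>Since the true reward \<open>R\<close> is \<open>1\<close>-Lipschitz and known on the non-corrupt states, it
  lies pointwise between the lower and upper Lipschitz bounds. For an \<open>R_up\<close>-optimal \<open>\<pi>'\<close>
  and any \<open>\<sigma>\<close> this gives \<open>V R \<sigma> \<le> V R_up \<sigma> \<le> V R_up \<pi>'\<close> and \<open>V R_low \<pi>' \<le> V R \<pi>'\<close>,
  so the regret of \<open>\<pi>'\<close> is at most \<open>V (R_up - R_low) \<pi>'\<close>, one of the values over which the
  supremum is taken.\<close>

lemma policy_value_mono:
  assumes "integrable (measure_pmf (traj \<pi>)) (\<lambda>\<tau>. sum_list (map f \<tau>))"
    and "integrable (measure_pmf (traj \<pi>)) (\<lambda>\<tau>. sum_list (map g \<tau>))"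
    and "\<And>x. f x \<le> g x"
  shows "policy_value traj f \<pi> \<le> policy_value traj g \<pi>"
  unfolding policy_value_def
  by (rule integral_mono[OF assms(1,2)]) (simp add: sum_list_mono assms(3))

lemma policy_value_diff:
  assumes "integrable (measure_pmf (traj \<pi>)) (\<lambda>\<tau>. sum_list (map f \<tau>))"
    and "integrable (measure_pmf (traj \<pi>)) (\<lambda>\<tau>. sum_list (map g \<tau>))"
  shows "policy_value traj (\<lambda>x. f x - g x) \<pi> = policy_value traj f \<pi> - policy_value traj g \<pi>"
  unfolding policy_value_def
  by (simp add: sum_list_subtractf Bochner_Integration.integral_diff[OF assms])

lemma R_low_le:
  fixes R C :: "'s::finite \<Rightarrow> real"
  assumes "noncorrupt R C \<noteq> {}" and "\<And>x y. \<bar>R x - R y\<bar> \<le> d x y"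
  shows "R_low R C d x \<le> R x"
proof -
  have "R_low R C d x \<in> (\<lambda>y. R y - d x y) ` noncorrupt R C"
    unfolding R_low_def using assms(1) by (intro Max_in) auto
  then obtain y where "R_low R C d x = R y - d x y" by auto
  with assms(2)[of x y] show ?thesis by auto
qed

lemma R_up_ge:
  fixes R C :: "'s::finite \<Rightarrow> real"
  assumes "noncorrupt R C \<noteq> {}" and "\<And>x y. \<bar>R x - R y\<bar> \<le> d x y"
  shows "R x \<le> R_up R C d x"
proof -
  have "R_up R C d x \<in> (\<lambda>y. R y + d x y) ` noncorrupt R C"
    unfolding R_up_def using assms(1) by (intro Min_in) auto
  then obtain y where "R_up R C d x = R y + d x y" by auto
  with assms(2)[of x y] show ?thesis by auto
qed

lemma regret_le_bound_gap:
  assumes integrable: "\<And>\<pi> (f :: 's \<Rightarrow> real). \<pi> \<in> Pol \<Longrightarrow>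
            integrable (measure_pmf (traj \<pi>)) (\<lambda>\<tau>. sum_list (map f \<tau>))"
    and opt: "optimal Pol traj r_up \<pi>'" and "\<sigma> \<in> Pol"
    and low: "\<And>x. r_low x \<le> r x" and up: "\<And>x. r x \<le> r_up x"
  shows "policy_value traj r \<sigma> - policy_value traj r \<pi>'
         \<le> policy_value traj (\<lambda>x. r_up x - r_low x) \<pi>'"
proof -
  have "\<pi>' \<in> Pol" using opt unfolding optimal_def by simp
  have "policy_value traj r \<sigma> \<le> policy_value traj r_up \<sigma>"
    using \<open>\<sigma> \<in> Pol\<close> by (intro policy_value_mono integrable up)
  also have "\<dots> \<le> policy_value traj r_up \<pi>'"
    using opt \<open>\<sigma> \<in> Pol\<close> unfolding optimal_def by simp
  finally have "policy_value traj r \<sigma> \<le> policy_value traj r_up \<pi>'" .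
  moreover have "policy_value traj r_low \<pi>' \<le> policy_value traj r \<pi>'"
    using \<open>\<pi>' \<in> Pol\<close> by (intro policy_value_mono integrable low)
  moreover have "policy_value traj (\<lambda>x. r_up x - r_low x) \<pi>'
      = policy_value traj r_up \<pi>' - policy_value traj r_low \<pi>'"
    using \<open>\<pi>' \<in> Pol\<close> by (intro policy_value_diff integrable)
  ultimately show ?thesis by linarith
qed

theorem proposition2:
  fixes R C :: "'s::finite \<Rightarrow> real" and d :: "'s \<Rightarrow> 's \<Rightarrow> real"
    and LV :: "'s set \<Rightarrow> 's \<Rightarrow> real"
    and Pol :: "'p set" and traj :: "'p \<Rightarrow> 's list pmf"
    and \<pi>' \<pi>star :: 'p
  assumes "spiky R C d LV"
    and finite_values: "\<And>\<pi> (r :: 's \<Rightarrow> real). \<pi> \<in> Pol \<Longrightarrow>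
            integrable (measure_pmf (traj \<pi>)) (\<lambda>\<tau>. sum_list (map r \<tau>))"
    and "optimal Pol traj (R_up R C d) \<pi>'"
    and "optimal Pol traj R \<pi>star"
  shows "ereal (policy_value traj R \<pi>star - policy_value traj R \<pi>')
         \<le> (SUP \<pi>\<in>{\<pi>. optimal Pol traj (R_up R C d) \<pi>}.
               ereal (policy_value traj (\<lambda>x. R_up R C d x - R_low R C d x) \<pi>))"
proof -
  have "noncorrupt R C \<noteq> {}" and "\<And>x y. \<bar>R x - R y\<bar> \<le> d x y"
    using assms(1) unfolding spiky_def by auto
  moreover have "\<pi>star \<in> Pol" using assms(4) unfolding optimal_def by simp
  ultimately have "policy_value traj R \<pi>star - policy_value traj R \<pi>'
      \<le> policy_value traj (\<lambda>x. R_up R C d x - R_low R C d x) \<pi>'"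
    by (intro regret_le_bound_gap[OF finite_values assms(3)] R_low_le R_up_ge)
  then have "ereal (policy_value traj R \<pi>star - policy_value traj R \<pi>')
      \<le> ereal (policy_value traj (\<lambda>x. R_up R C d x - R_low R C d x) \<pi>')"
    by simp
  also have "\<dots> \<le> (SUP \<pi>\<in>{\<pi>. optimal Pol traj (R_up R C d) \<pi>}.
               ereal (policy_value traj (\<lambda>x. R_up R C d x - R_low R C d x) \<pi>))"
    using assms(3) by (intro SUP_upper) auto
  finally show ?thesis .
qed

end
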